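(* Let $H_n=\sum_{j=1}^n\frac1j$, let $\gamma$ be the Euler–Mascheroni constant, $\Gamma$ the gamma function, and $z^{\overline{k}} = z(z+1) \cdots (z + k -1)$ the rising factorial. Then: (i) for $k \in \{1 ,2, \ldots\}$, $$\sum_{n=1}^\infty (-1)^n \left(H_n - \log\sqrt[k]{n^{\overline{k}}} - \gamma \right) = \frac{\gamma}{2} - \frac{\log(\pi)}{2k} + \frac{1}{k}\log\Gamma\left(\frac{k+1}{2}\right);$$ (ii) for $x > 0$, $$\sum_{n=1}^\infty (-1)^n \left(H_n - \log(n + x -1) - \gamma \right) = \frac{\gamma}{2} + \log\left[\frac{\Gamma\left(\frac{x + 1}{2}\right)}{\Gamma \left(\frac{x}{2}\right)} \right].$$ *)

theory Defs
  imports "HOL-Analysis.Analysis"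
begin

end

theory Submission
  imports Defs "HOL-Real_Asymp.Real_Asymp" "HOL-Probability.Characteristic_Functions"
begin

(* Pairing the terms of index 2i+1 and 2i+2 in (ii) gives 1/(2(i+1)) - ln((x+1)/2 + i) + ln(x/2 + i),
   so the 2N-th partial sum is H_N/2 plus the logarithm of a quotient of rising factorials
   (x/2)^(N) / ((x+1)/2)^(N). By Gauss's product formula for Gamma this quotient times sqrt N
   tends to Gamma((x+1)/2) / Gamma(x/2), and H_N - ln N tends to gamma; since the terms tend
   to 0, the even partial sums determine the series.
   Part (i) is the mean of (ii) over x = 1, ..., k: the logarithm of the k-th root of n^(k)
   is the mean of ln(n + j), and the Gamma quotients telescope to Gamma((k+1)/2) / Gamma(1/2),
   where Gamma(1/2) = sqrt pi. *)

lemma sums_if_even_partial_sums_tendsto: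
  fixes f :: "nat \<Rightarrow> 'a::topological_comm_monoid_add"
  assumes even_sums: "(\<lambda>N. sum f {..<2*N}) \<longlonglongrightarrow> L" and "f \<longlonglongrightarrow> 0"
  shows "f sums L"
  unfolding sums_def
proof (rule limseq_even_odd)
  have "(\<lambda>N. f (2*N)) \<longlonglongrightarrow> 0"
    using LIMSEQ_subseq_LIMSEQ[OF \<open>f \<longlonglongrightarrow> 0\<close>, of "\<lambda>N. 2*N"] by (simp add: strict_mono_def o_def)
  from tendsto_add[OF even_sums this]
  show "(\<lambda>N. sum f {..<2*N + 1}) \<longlonglongrightarrow> L" by simp
qed (fact even_sums)

lemma ln_pochhammer_eq_sum:
  fixes z :: real
  assumes "z > 0"
  shows "ln (pochhammer z n) = (\<Sum>i<n. ln (z + real i))"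
  using assms by (simp add: pochhammer_prod ln_prod atLeast0LessThan add_pos_nonneg)

lemma pochhammer_ratio_LIMSEQ:
  fixes a b :: real
  assumes "a > 0" "b > 0"
  shows "(\<lambda>n. pochhammer a n / pochhammer b n * real n powr (b - a)) \<longlonglongrightarrow> Gamma b / Gamma a"
proof (rule Lim_transform_eventually)
  show "(\<lambda>n. Gamma_series' b n / Gamma_series' a n) \<longlonglongrightarrow> Gamma b / Gamma a"
    using Gamma_real_pos[OF \<open>a > 0\<close>] by (intro tendsto_divide Gamma_series'_LIMSEQ) auto
  have "Gamma_series' b n / Gamma_series' a n = pochhammer a n / pochhammer b n * real n powr (b - a)"
    if "n > 0" for n
    using that assms pochhammer_pos[of a n] pochhammer_pos[of b n]
    by (simp add: Gamma_series'_def powr_def exp_diff left_diff_distrib)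
  then show "\<forall>\<^sub>F n in sequentially. Gamma_series' b n / Gamma_series' a n
               = pochhammer a n / pochhammer b n * real n powr (b - a)"
    by (auto simp: eventually_at_top_dense)
qed

(* Term n is the paper's term of index n + 1, since series here start at index 0. *)
definition alt_euler_term :: "real \<Rightarrow> nat \<Rightarrow> real" where
  "alt_euler_term x n = (-1) ^ Suc n * (harm (Suc n) - ln (real (Suc n) + x - 1) - euler_mascheroni)"

lemma alt_euler_term_LIMSEQ_zero:
  assumes "x > 0"
  shows "alt_euler_term x \<longlonglongrightarrow> 0"
proof -
  have harm_ln: "(\<lambda>n. harm (Suc n) - ln (real (Suc n)) :: real) \<longlonglongrightarrow> euler_mascheroni"
    using LIMSEQ_Suc[OF euler_mascheroni_LIMSEQ] by simp
  have ln_shift: "(\<lambda>n. ln (real n + x) - ln (real n + 1)) \<longlonglongrightarrow> 0"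
    using assms by real_asymp
  have "(\<lambda>n. (harm (Suc n) - ln (real (Suc n))) - (ln (real n + x) - ln (real n + 1)) - euler_mascheroni)
          \<longlonglongrightarrow> euler_mascheroni - 0 - euler_mascheroni"
    by (intro tendsto_diff harm_ln ln_shift tendsto_const)
  then have "(\<lambda>n. harm (Suc n) - ln (real (Suc n) + x - 1) - euler_mascheroni) \<longlonglongrightarrow> 0"
    by (simp add: add.commute)
  then have "(\<lambda>n. norm (alt_euler_term x n)) \<longlonglongrightarrow> 0"
    by (simp add: alt_euler_term_def abs_mult tendsto_rabs_zero_iff)
  then show ?thesis
    by (rule tendsto_norm_zero_cancel)
qed

lemma alt_euler_term_pair:
  assumes "x > 0"
  shows "alt_euler_term x (2*i) + alt_euler_term x (2*i + 1)
           = 1 / (2 * real (Suc i)) - ln ((x + 1) / 2 + real i) + ln (x / 2 + real i)"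
proof -
  have "alt_euler_term x (2*i) + alt_euler_term x (2*i + 1)
          = (harm (Suc (Suc (2*i))) - harm (Suc (2*i))) - ln (2 * real i + x + 1) + ln (2 * real i + x)"
    by (simp add: alt_euler_term_def algebra_simps)
  moreover have "harm (Suc (Suc (2*i))) - harm (Suc (2*i)) = (1::real) / (2 * real (Suc i))"
    by (simp add: harm_Suc divide_inverse)
  moreover have "ln (2 * real i + x + 1) = ln 2 + ln ((x + 1) / 2 + real i)"
    using assms by (subst ln_mult_pos[symmetric]) (auto simp: field_simps)
  moreover have "ln (2 * real i + x) = ln 2 + ln (x / 2 + real i)"
    using assms by (subst ln_mult_pos[symmetric]) (auto simp: field_simps)
  ultimately show ?thesis
    by simp
qed

lemma sum_alt_euler_term_even:
  assumes "x > 0"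
  shows "sum (alt_euler_term x) {..<2*N}
           = harm N / 2 - ln (pochhammer ((x + 1) / 2) N) + ln (pochhammer (x / 2) N)"
proof -
  have "sum (alt_euler_term x) {..<2*N} = (\<Sum>i<N. alt_euler_term x (2*i) + alt_euler_term x (2*i + 1))"
    using sum_split_even_odd[of "alt_euler_term x" "alt_euler_term x" N] by (simp add: sum.distrib)
  also have "\<dots> = (\<Sum>i<N. 1 / (2 * real (Suc i)) - ln ((x + 1) / 2 + real i) + ln (x / 2 + real i))"
    by (rule sum.cong[OF refl]) (rule alt_euler_term_pair[OF assms])
  also have "\<dots> = (\<Sum>i<N. 1 / (2 * real (Suc i))) - (\<Sum>i<N. ln ((x + 1) / 2 + real i))
                    + (\<Sum>i<N. ln (x / 2 + real i))"
    by (simp add: sum.distrib sum_subtractf)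
  also have "(\<Sum>i<N. 1 / (2 * real (Suc i))) = harm N / 2"
    unfolding harm_altdef sum_divide_distrib by (simp add: field_simps)
  finally show ?thesis
    using assms by (simp add: ln_pochhammer_eq_sum)
qed

lemma alt_euler_term_even_partial_sums_LIMSEQ:
  assumes "x > 0"
  shows "(\<lambda>N. sum (alt_euler_term x) {..<2*N})
           \<longlonglongrightarrow> euler_mascheroni / 2 + ln (Gamma ((x + 1) / 2) / Gamma (x / 2))"
proof (rule Lim_transform_eventually)
  define a b where "a = x / 2" and "b = (x + 1) / 2"
  have "a > 0" "b > 0" "b - a = 1 / 2" using assms by (auto simp: a_def b_def field_simps)
  let ?ratio = "\<lambda>N. pochhammer a N / pochhammer b N * real N powr (b - a)"
  have "(\<lambda>N. (harm N - ln (real N)) / 2 + ln (?ratio N))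
          \<longlonglongrightarrow> euler_mascheroni / 2 + ln (Gamma b / Gamma a)"
  proof (intro tendsto_add tendsto_divide tendsto_const euler_mascheroni_LIMSEQ)
    show "(\<lambda>N. ln (?ratio N)) \<longlonglongrightarrow> ln (Gamma b / Gamma a)"
      using Gamma_real_pos[OF \<open>a > 0\<close>] Gamma_real_pos[OF \<open>b > 0\<close>]
      by (intro tendsto_ln pochhammer_ratio_LIMSEQ \<open>a > 0\<close> \<open>b > 0\<close>) simp
  qed simp
  then show "(\<lambda>N. (harm N - ln (real N)) / 2 + ln (?ratio N))
               \<longlonglongrightarrow> euler_mascheroni / 2 + ln (Gamma ((x + 1) / 2) / Gamma (x / 2))"
    by (simp only: a_def b_def)
  have "(harm N - ln (real N)) / 2 + ln (?ratio N) = sum (alt_euler_term x) {..<2*N}" if "N > 0" for N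
  proof -
    have "ln (?ratio N) = ln (pochhammer a N) - ln (pochhammer b N) + ln (real N) / 2"
      using that \<open>a > 0\<close> \<open>b > 0\<close> pochhammer_pos[of a N] pochhammer_pos[of b N]
      by (simp add: ln_mult ln_div ln_powr \<open>b - a = 1 / 2\<close>)
    moreover have "sum (alt_euler_term x) {..<2*N} = harm N / 2 - ln (pochhammer b N) + ln (pochhammer a N)"
      unfolding a_def b_def by (rule sum_alt_euler_term_even[OF assms])
    ultimately show ?thesis
      by argo
  qed
  then show "\<forall>\<^sub>F N in sequentially. (harm N - ln (real N)) / 2 + ln (?ratio N) = sum (alt_euler_term x) {..<2*N}"
    by (auto simp: eventually_at_top_dense)
qed

theorem alt_euler_term_sums:
  assumes "x > 0"
  shows "alt_euler_term x sums (euler_mascheroni / 2 + ln (Gamma ((x + 1) / 2) / Gamma (x / 2)))"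
  using alt_euler_term_even_partial_sums_LIMSEQ[OF assms] alt_euler_term_LIMSEQ_zero[OF assms]
  by (rule sums_if_even_partial_sums_tendsto)

theorem alt_euler_pochhammer_sums:
  assumes "x > 0" "k > 0"
  shows "(\<lambda>n. (-1) ^ Suc n * (harm (Suc n) - ln (pochhammer (real (Suc n) + x - 1) k) / real k
                              - euler_mascheroni))
           sums (euler_mascheroni / 2 + (ln (Gamma ((x + real k) / 2)) - ln (Gamma (x / 2))) / real k)"
proof -
  define G where "G j = ln (Gamma ((x + real j) / 2))" for j :: nat
  have averaged_sums: "(\<lambda>n. (\<Sum>j<k. alt_euler_term (x + real j) n) / real k)
          sums ((\<Sum>j<k. euler_mascheroni / 2 + ln (Gamma ((x + real j + 1) / 2) / Gamma ((x + real j) / 2))) / real k)"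
    using assms by (intro sums_divide sums_sum alt_euler_term_sums) (auto intro: add_pos_nonneg)
  have terms_eq: "(\<Sum>j<k. alt_euler_term (x + real j) n) / real k
      = (-1) ^ Suc n * (harm (Suc n) - ln (pochhammer (real (Suc n) + x - 1) k) / real k - euler_mascheroni)"
    for n
  proof -
    have "ln (pochhammer (real (Suc n) + x - 1) k) = (\<Sum>j<k. ln (real (Suc n) + (x + real j) - 1))"
      using assms by (simp add: ln_pochhammer_eq_sum add_pos_nonneg algebra_simps)
    moreover have "(\<Sum>j<k. alt_euler_term (x + real j) n) = (-1) ^ Suc n *
        (real k * (harm (Suc n) - euler_mascheroni) - (\<Sum>j<k. ln (real (Suc n) + (x + real j) - 1)))"
      by (simp only: alt_euler_term_def sum_distrib_left[symmetric])
         (simp add: sum_subtractf sum.distrib algebra_simps)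
    ultimately show ?thesis
      using assms by (simp add: field_simps)
  qed
  have "ln (Gamma ((x + real j + 1) / 2) / Gamma ((x + real j) / 2)) = G (Suc j) - G j" for j
  proof -
    have "Gamma ((x + real j + 1) / 2) > 0" "Gamma ((x + real j) / 2) > 0"
      using assms by (simp_all add: Gamma_real_pos add_pos_nonneg)
    then show ?thesis
      by (simp add: G_def ln_div add_ac)
  qed
  then have "(\<Sum>j<k. euler_mascheroni / 2 + ln (Gamma ((x + real j + 1) / 2) / Gamma ((x + real j) / 2)))
               = real k * euler_mascheroni / 2 + (G k - G 0)"
    by (simp add: sum.distrib sum_lessThan_telescope)
  then have limit_eq: "(\<Sum>j<k. euler_mascheroni / 2 + ln (Gamma ((x + real j + 1) / 2) / Gamma ((x + real j) / 2)))
                         / real k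
      = euler_mascheroni / 2 + (ln (Gamma ((x + real k) / 2)) - ln (Gamma (x / 2))) / real k"
    using assms by (simp add: G_def field_simps)
  show ?thesis
    using averaged_sums[unfolded terms_eq limit_eq] .
qed

corollary alt_euler_root_pochhammer_sums:
  assumes "k \<ge> 1"
  shows "(\<lambda>n. (-1) ^ Suc n * (harm (Suc n) - ln (root k (pochhammer (real (Suc n)) k)) - euler_mascheroni))
           sums (euler_mascheroni / 2 - ln pi / (2 * real k) + ln (Gamma ((real k + 1) / 2)) / real k)"
proof -
  have terms_eq: "(\<lambda>n. (-1) ^ Suc n * (harm (Suc n) - ln (pochhammer (real (Suc n) + 1 - 1) k) / real k
                              - euler_mascheroni))
      = (\<lambda>n. (-1) ^ Suc n * (harm (Suc n) - ln (root k (pochhammer (real (Suc n)) k)) - euler_mascheroni))"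
    using assms by (simp add: ln_root)
  have limit_eq: "euler_mascheroni / 2 + (ln (Gamma ((1 + real k) / 2)) - ln (Gamma (1 / 2))) / real k
      = euler_mascheroni / 2 - ln pi / (2 * real k) + ln (Gamma ((real k + 1) / 2)) / real k"
    by (simp add: Gamma_one_half_real ln_sqrt add.commute diff_divide_distrib)
  show ?thesis
    using alt_euler_pochhammer_sums[of 1 k, unfolded terms_eq limit_eq] assms by simp
qed

theorem mainTheorem11:
  shows "(\<forall>k::nat. k \<ge> 1 \<longrightarrow>
           (\<lambda>n. (-1) ^ Suc n * (harm (Suc n) - ln (root k (pochhammer (real (Suc n)) k)) - euler_mascheroni))
             sums (euler_mascheroni / 2 - ln pi / (2 * real k) + ln (Gamma ((real k + 1) / 2)) / real k))
       \<and> (\<forall>x::real. x > 0 \<longrightarrow>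
           (\<lambda>n. (-1) ^ Suc n * (harm (Suc n) - ln (real (Suc n) + x - 1) - euler_mascheroni))
             sums (euler_mascheroni / 2 + ln (Gamma ((x + 1) / 2) / Gamma (x / 2))))"
  using alt_euler_root_pochhammer_sums alt_euler_term_sums unfolding alt_euler_term_def by blast

end
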